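(* Let $C$, $\mathcal D$ and $d$ be as in the context. For subsets $A,B\subseteq{\bf R}^d$ define $\hat d(A;B)=\sup_{\psi\in\mathcal D}\inf_{x\in A,y\in B}(\psi(x)-\psi(y))$. If $A$ and $B$ are compact then $\hat d(A;B)=d(A;B)$.
   Context: Let $C=(c_{ij})$ be a real-valued symmetric $d\times d$ matrix function on ${\bf R}^d$ with measurable, locally integrable entries, positive-definite almost everywhere. Let $\mathcal D=\{\psi\in W^{1,\infty}({\bf R}^d):\sum_{i,j}c_{ij}(\partial_i\psi)(\partial_j\psi)\le1$ a.e.$\}$ (elements identified with their continuous representatives), $d(x;y)=\sup_{\psi\in\mathcal D}(\psi(x)-\psi(y))\in[0,\infty]$, and $d(A;B)=\inf_{x\in A,y\in B}d(x;y)$. *)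

theory Defs
  imports "HOL-Analysis.Analysis"
begin

definition coeff_ok :: "(real^'n \<Rightarrow> real^'n^'n) \<Rightarrow> bool" where
  "coeff_ok C \<longleftrightarrow>
     (\<forall>x i j. C x $ i $ j = C x $ j $ i) \<and>
     (\<forall>i j. (\<lambda>x. C x $ i $ j) \<in> borel_measurable lebesgue) \<and>
     (\<forall>i j K. compact K \<longrightarrow> set_integrable lebesgue K (\<lambda>x. C x $ i $ j)) \<and>
     (AE x in lebesgue. \<forall>\<xi>::real^'n. \<xi> \<noteq> 0 \<longrightarrow>
        (\<Sum>i\<in>UNIV. \<Sum>j\<in>UNIV. C x $ i $ j * \<xi> $ i * \<xi> $ j) > 0)"

text \<open>W^{1,\<infinity>} functions (continuous representatives): bounded Lipschitz functions.\<close>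
definition W1inf :: "(real^'n \<Rightarrow> real) set" where
  "W1inf = {\<psi>. bounded (range \<psi>) \<and> (\<exists>L. L-lipschitz_on UNIV \<psi>)}"

text \<open>The class D: a.e. (where the Lipschitz function is differentiable, by Rademacher
  a.e.) the gradient satisfies sum c_ij d_i psi d_j psi <= 1.\<close>
definition Dset :: "(real^'n \<Rightarrow> real^'n^'n) \<Rightarrow> (real^'n \<Rightarrow> real) set" where
  "Dset C = {\<psi> \<in> W1inf. AE x in lebesgue. \<exists>D. (\<psi> has_derivative D) (at x) \<and>
      (\<Sum>i\<in>UNIV. \<Sum>j\<in>UNIV. C x $ i $ j * D (axis i 1) * D (axis j 1)) \<le> 1}"

definition dist_C :: "(real^'n \<Rightarrow> real^'n^'n) \<Rightarrow> real^'n \<Rightarrow> real^'n \<Rightarrow> ereal" where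
  "dist_C C x y = (SUP \<psi>\<in>Dset C. ereal (\<psi> x - \<psi> y))"

definition setdist_C :: "(real^'n \<Rightarrow> real^'n^'n) \<Rightarrow> (real^'n) set \<Rightarrow> (real^'n) set \<Rightarrow> ereal" where
  "setdist_C C A B = (INF p\<in>A \<times> B. dist_C C (fst p) (snd p))"

definition setdist_hat_C :: "(real^'n \<Rightarrow> real^'n^'n) \<Rightarrow> (real^'n) set \<Rightarrow> (real^'n) set \<Rightarrow> ereal" where
  "setdist_hat_C C A B = (SUP \<psi>\<in>Dset C. INF p\<in>A \<times> B. ereal (\<psi> (fst p) - \<psi> (snd p)))"

end

theory Submission imports Defs begin

text \<open>One inequality is immediate. For the other, suppose \<open>d(x;y) > r\<close> on \<open>A \<times> B\<close>.
  For fixed \<open>y\<in>B\<close>, compactness of \<open>A\<close> gives finitely many functions of \<open>D\<close> whose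
  maximum is large on \<open>A\<close> and small at \<open>y\<close>; compactness of \<open>B\<close> then gives finitely many
  of these whose minimum separates \<open>A\<close> from \<open>B\<close> by nearly \<open>r\<close>. Minima reduce to maxima
  because \<open>D\<close> is closed under negation. \<open>D\<close> is closed under the maximum of two functions
  whose tie set is null, since almost everywhere the maximum locally coincides with one of
  them; the tie set is made null by shifting one function by a small constant, as a
  continuous function has at most countably many level sets of positive measure. Thus only
  approximate maxima are formed, which is all the argument needs.\<close>

lemma countable_non_null_level_sets:
  fixes f :: "'a::euclidean_space \<Rightarrow> real"
  assumes "continuous_on UNIV f"
  shows "countable {c. {z. f z = c} \<notin> null_sets lebesgue}"
proof -
  have f_meas: "f \<in> borel_measurable lebesgue"
    using assms by (simp add: borel_measurable_continuous_onI measurable_completion)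
  define M where "M k = distr (lebesgue_on (cball (0::'a) (real k))) borel f" for k :: nat
  have "finite_measure (M k)" for k
    unfolding M_def
    by (intro finite_measure.finite_measure_distr finite_measure_lebesgue_on lmeasurable_cball
        measurable_restrict_space1 f_meas)
  then have atoms_countable: "countable {c. measure (M k) {c} \<noteq> 0}" for k
    using finite_measure.countable_support by blast
  have "{c. {z. f z = c} \<notin> null_sets lebesgue} \<subseteq> (\<Union>k. {c. measure (M k) {c} \<noteq> 0})"
  proof (rule subsetI, rule ccontr)
    fix c
    assume non_null: "c \<in> {c. {z. f z = c} \<notin> null_sets lebesgue}"
      and "c \<notin> (\<Union>k. {c. measure (M k) {c} \<noteq> 0})"
    then have atom_null: "measure (M k) {c} = 0" for k by auto
    have level_meas: "{z. f z = c} \<in> sets lebesgue"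
      using measurable_sets[OF f_meas, of "{c}"] by (simp add: vimage_def)
    have "{z. f z = c} \<inter> cball 0 (real k) \<in> null_sets lebesgue" for k
    proof -
      have lm: "{z. f z = c} \<inter> cball 0 (real k) \<in> lmeasurable"
        using level_meas by (intro bounded_set_imp_lmeasurable) auto
      have "measure (M k) {c} = measure (lebesgue_on (cball 0 (real k))) (f -` {c} \<inter> cball 0 (real k))"
        unfolding M_def by (subst measure_distr) (auto intro!: measurable_restrict_space1 f_meas)
      also have "\<dots> = measure lebesgue ({z. f z = c} \<inter> cball 0 (real k))"
        by (subst measure_restrict_space) (auto simp: vimage_def)
      finally show ?thesis
        using atom_null lm by (auto intro!: null_setsI simp: emeasure_eq_measure2 fmeasurableD)
    qed
    then have "(\<Union>k. {z. f z = c} \<inter> cball 0 (real k)) \<in> null_sets lebesgue"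
      by (intro null_sets_UN)
    moreover have "(\<Union>k. {z. f z = c} \<inter> cball 0 (real k)) = {z. f z = c}"
      using real_arch_simple by (auto simp: dist_norm)
    ultimately show False
      using non_null by simp
  qed
  then show ?thesis
    by (rule countable_subset) (intro countable_UN[of UNIV] atoms_countable, auto)
qed

lemma W1inf_continuous: "\<psi> \<in> W1inf \<Longrightarrow> continuous_on UNIV \<psi>"
  unfolding W1inf_def using lipschitz_on_continuous_on by blast

lemma const_in_W1inf: "(\<lambda>_. c) \<in> W1inf"
  unfolding W1inf_def using lipschitz_on_constant by auto

lemma W1inf_uminus: "\<psi> \<in> W1inf \<Longrightarrow> (\<lambda>z. - \<psi> z) \<in> W1inf"
  unfolding W1inf_def by (auto simp: image_image[symmetric] simp del: image_image)

lemma W1inf_add_const: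
  assumes "\<psi> \<in> W1inf"
  shows "(\<lambda>z. \<psi> z + c) \<in> W1inf"
proof -
  have "bounded ((\<lambda>t. t + c) ` range \<psi>)"
    using assms bounded_translation[of "range \<psi>" c] unfolding W1inf_def by (simp add: add.commute)
  moreover obtain L where "L-lipschitz_on UNIV \<psi>"
    using assms unfolding W1inf_def by blast
  then have "(L + 0)-lipschitz_on UNIV (\<lambda>z. \<psi> z + c)"
    by (intro lipschitz_on_add lipschitz_on_constant)
  ultimately show ?thesis
    unfolding W1inf_def by (auto simp: image_image)
qed

lemma W1inf_max:
  assumes "f \<in> W1inf" "g \<in> W1inf"
  shows "(\<lambda>z. max (f z) (g z)) \<in> W1inf"
proof -
  obtain L M where L: "L-lipschitz_on UNIV f" and M: "M-lipschitz_on UNIV g"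
    using assms unfolding W1inf_def by blast
  obtain a b where a: "\<And>z. \<bar>f z\<bar> \<le> a" and b: "\<And>z. \<bar>g z\<bar> \<le> b"
    using assms unfolding W1inf_def bounded_iff by auto
  have "\<bar>max (f x) (g x) - max (f y) (g y)\<bar> \<le> max L M * dist x y" for x y
  proof -
    have "\<bar>f x - f y\<bar> \<le> max L M * dist x y" "\<bar>g x - g y\<bar> \<le> max L M * dist x y"
      using lipschitz_onD[OF L, of x y] lipschitz_onD[OF M, of x y]
      by (auto simp: dist_real_def intro: order_trans[OF _ mult_right_mono])
    then show ?thesis
      by (auto simp: max_def abs_if)
  qed
  then have "(max L M)-lipschitz_on UNIV (\<lambda>z. max (f z) (g z))"
    using lipschitz_on_nonneg[OF L] by (auto intro!: lipschitz_onI simp: dist_real_def)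
  moreover have "bounded (range (\<lambda>z. max (f z) (g z)))"
  proof -
    have "\<bar>max (f z) (g z)\<bar> \<le> max a b" for z
      using a[of z] b[of z] by (simp add: abs_le_iff) linarith
    then show ?thesis
      unfolding bounded_iff by auto
  qed
  ultimately show ?thesis
    unfolding W1inf_def by blast
qed

definition gradient_bounded_at :: "(real^'n \<Rightarrow> real^'n^'n) \<Rightarrow> (real^'n \<Rightarrow> real) \<Rightarrow> real^'n \<Rightarrow> bool" where
  "gradient_bounded_at C \<psi> x \<longleftrightarrow> (\<exists>D. (\<psi> has_derivative D) (at x) \<and>
      (\<Sum>i\<in>UNIV. \<Sum>j\<in>UNIV. C x $ i $ j * D (axis i 1) * D (axis j 1)) \<le> 1)"

lemma Dset_iff: "\<psi> \<in> Dset C \<longleftrightarrow> \<psi> \<in> W1inf \<and> (AE x in lebesgue. gradient_bounded_at C \<psi> x)"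
  unfolding Dset_def gradient_bounded_at_def by blast

lemma gradient_bounded_at_uminus:
  assumes "gradient_bounded_at C \<psi> x"
  shows "gradient_bounded_at C (\<lambda>z. - \<psi> z) x"
proof -
  obtain D where "(\<psi> has_derivative D) (at x)"
    and "(\<Sum>i\<in>UNIV. \<Sum>j\<in>UNIV. C x $ i $ j * D (axis i 1) * D (axis j 1)) \<le> 1"
    using assms unfolding gradient_bounded_at_def by blast
  then show ?thesis
    unfolding gradient_bounded_at_def by (intro exI[of _ "\<lambda>h. - D h"]) (auto intro: has_derivative_minus)
qed

lemma gradient_bounded_at_add_const:
  "gradient_bounded_at C \<psi> x \<Longrightarrow> gradient_bounded_at C (\<lambda>z. \<psi> z + c) x"
  unfolding gradient_bounded_at_def by (auto intro: has_derivative_add_const)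

lemma gradient_bounded_at_transform_open:
  assumes "gradient_bounded_at C \<psi> x" "open S" "x \<in> S" "\<And>w. w \<in> S \<Longrightarrow> g w = \<psi> w"
  shows "gradient_bounded_at C g x"
proof -
  obtain D where "(\<psi> has_derivative D) (at x)"
    and "(\<Sum>i\<in>UNIV. \<Sum>j\<in>UNIV. C x $ i $ j * D (axis i 1) * D (axis j 1)) \<le> 1"
    using assms(1) unfolding gradient_bounded_at_def by blast
  moreover from this(1) assms(2,3) have "(g has_derivative D) (at x)"
    by (rule has_derivative_transform_within_open) (simp add: assms(4))
  ultimately show ?thesis
    unfolding gradient_bounded_at_def by blast
qed

lemma Dset_continuous: "\<psi> \<in> Dset C \<Longrightarrow> continuous_on UNIV \<psi>"
  by (simp add: Dset_iff W1inf_continuous)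

lemma const_in_Dset: "(\<lambda>_. c) \<in> Dset C"
  unfolding Dset_iff gradient_bounded_at_def
  by (auto intro!: const_in_W1inf exI[of _ "\<lambda>_. 0"])

lemma Dset_uminus: "\<psi> \<in> Dset C \<Longrightarrow> (\<lambda>z. - \<psi> z) \<in> Dset C"
  unfolding Dset_iff by (auto intro: W1inf_uminus gradient_bounded_at_uminus elim!: eventually_mono)

lemma Dset_add_const: "\<psi> \<in> Dset C \<Longrightarrow> (\<lambda>z. \<psi> z + c) \<in> Dset C"
  unfolding Dset_iff by (auto intro: W1inf_add_const gradient_bounded_at_add_const elim!: eventually_mono)

lemma Dset_max:
  assumes \<psi>1: "\<psi>1 \<in> Dset C" and \<psi>2: "\<psi>2 \<in> Dset C"
    and tie_null: "{z. \<psi>1 z = \<psi>2 z} \<in> null_sets lebesgue"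
  shows "(\<lambda>z. max (\<psi>1 z) (\<psi>2 z)) \<in> Dset C"
proof -
  have c1: "continuous_on UNIV \<psi>1" and c2: "continuous_on UNIV \<psi>2"
    using \<psi>1 \<psi>2 by (simp_all add: Dset_continuous)
  have ae1: "AE x in lebesgue. gradient_bounded_at C \<psi>1 x"
    and ae2: "AE x in lebesgue. gradient_bounded_at C \<psi>2 x"
    using \<psi>1 \<psi>2 by (simp_all add: Dset_iff)
  have "AE x in lebesgue. gradient_bounded_at C (\<lambda>z. max (\<psi>1 z) (\<psi>2 z)) x"
    using ae1 ae2 AE_not_in[OF tie_null]
  proof eventually_elim
    case (elim x)
    then consider "\<psi>1 x < \<psi>2 x" | "\<psi>2 x < \<psi>1 x"
      by fastforce
    then show ?case
    proof cases
      case 1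
      with open_Collect_less[OF c1 c2] show ?thesis
        by (intro gradient_bounded_at_transform_open[OF elim(2)]) auto
    next
      case 2
      with open_Collect_less[OF c2 c1] show ?thesis
        by (intro gradient_bounded_at_transform_open[OF elim(1)]) auto
    qed
  qed
  with \<psi>1 \<psi>2 show ?thesis
    unfolding Dset_iff by (auto intro: W1inf_max)
qed

lemma exists_small_shift_null_tie:
  assumes "\<psi>1 \<in> Dset C" "\<psi>2 \<in> Dset C" "(\<epsilon>::real) > 0"
  shows "\<exists>c. \<bar>c\<bar> < \<epsilon> \<and> {z. \<psi>1 z = \<psi>2 z + c} \<in> null_sets lebesgue"
proof -
  have "continuous_on UNIV (\<lambda>z. \<psi>1 z - \<psi>2 z)"
    using Dset_continuous[OF assms(1)] Dset_continuous[OF assms(2)] by (rule continuous_on_diff)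
  then have "countable {c. {z. \<psi>1 z - \<psi>2 z = c} \<notin> null_sets lebesgue}"
    by (rule countable_non_null_level_sets)
  moreover have "uncountable {-\<epsilon><..<\<epsilon>}"
    using assms(3) by (simp add: uncountable_open_interval)
  ultimately obtain c where "c \<in> {-\<epsilon><..<\<epsilon>}" "{z. \<psi>1 z - \<psi>2 z = c} \<in> null_sets lebesgue"
    by (metis (mono_tags, lifting) countable_subset mem_Collect_eq subsetI)
  moreover have "{z. \<psi>1 z = \<psi>2 z + c} = {z. \<psi>1 z - \<psi>2 z = c}"
    by auto
  ultimately show ?thesis
    by (intro exI[of _ c]) auto
qed

lemma Dset_approx_Max:
  assumes "finite T" "T \<noteq> {}" "\<forall>i\<in>T. f i \<in> Dset C" "(\<epsilon>::real) > 0"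
  shows "\<exists>\<psi>\<in>Dset C. \<forall>z. (\<forall>i\<in>T. f i z \<le> \<psi> z + \<epsilon>) \<and> (\<exists>i\<in>T. \<psi> z \<le> f i z + \<epsilon>)"
  using assms
proof (induction T arbitrary: \<epsilon> rule: finite_ne_induct)
  case (singleton x)
  then show ?case
    by (intro bexI[of _ "f x"]) auto
next
  case (insert x F)
  obtain \<psi> where \<psi>: "\<psi> \<in> Dset C"
    "\<And>z. (\<forall>i\<in>F. f i z \<le> \<psi> z + \<epsilon>/2) \<and> (\<exists>i\<in>F. \<psi> z \<le> f i z + \<epsilon>/2)"
    using insert.IH[of "\<epsilon>/2"] insert.prems by auto
  have fx: "f x \<in> Dset C"
    using insert.prems by auto
  obtain c where c: "\<bar>c\<bar> < \<epsilon>/2" "{z. \<psi> z = f x z + c} \<in> null_sets lebesgue"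
    using exists_small_shift_null_tie[OF \<psi>(1) fx, of "\<epsilon>/2"] insert.prems by auto
  define \<phi> where "\<phi> z = max (\<psi> z) (f x z + c)" for z
  have "\<phi> \<in> Dset C"
    unfolding \<phi>_def using c by (intro Dset_max \<psi>(1) Dset_add_const fx) auto
  moreover have "(\<forall>i\<in>insert x F. f i z \<le> \<phi> z + \<epsilon>) \<and> (\<exists>i\<in>insert x F. \<phi> z \<le> f i z + \<epsilon>)" for z
  proof
    show "\<forall>i\<in>insert x F. f i z \<le> \<phi> z + \<epsilon>"
      using \<psi>(2)[of z] c(1) by (auto simp: \<phi>_def)
    show "\<exists>i\<in>insert x F. \<phi> z \<le> f i z + \<epsilon>"
    proof (cases "\<psi> z \<le> f x z + c")
      case True
      then show ?thesis
        using c(1) by (intro bexI[of _ x]) (auto simp: \<phi>_def)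
    next
      case False
      moreover obtain i where "i \<in> F" "\<psi> z \<le> f i z + \<epsilon>/2"
        using \<psi>(2)[of z] by auto
      ultimately show ?thesis
        using insert.prems by (intro bexI[of _ i]) (auto simp: \<phi>_def)
    qed
  qed
  ultimately show ?case
    by blast
qed

lemma Dset_compact_cover:
  assumes "compact K" "K \<noteq> {}" "(\<delta>::real) > 0"
    and "\<forall>x\<in>K. \<exists>\<phi>\<in>Dset C. b < \<phi> x \<and> (\<forall>z\<in>S. \<phi> z \<le> a)"
  shows "\<exists>\<Phi>\<in>Dset C. (\<forall>x\<in>K. b - \<delta> < \<Phi> x) \<and> (\<forall>z\<in>S. \<Phi> z \<le> a + \<delta>)"
proof -
  obtain \<phi> where \<phi>: "\<And>x. x \<in> K \<Longrightarrow> \<phi> x \<in> Dset C \<and> b < \<phi> x x \<and> (\<forall>z\<in>S. \<phi> x z \<le> a)"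
    using assms(4) by metis
  have "open {z. b < \<phi> x z}" if "x \<in> K" for x
    using open_Collect_less[OF continuous_on_const Dset_continuous] \<phi>[OF that] by blast
  moreover have "K \<subseteq> (\<Union>x\<in>K. {z. b < \<phi> x z})"
    using \<phi> by auto
  ultimately obtain T where T: "T \<subseteq> K" "finite T" "K \<subseteq> (\<Union>x\<in>T. {z. b < \<phi> x z})"
    using compactE_image[OF assms(1)] by metis
  then have "T \<noteq> {}"
    using assms(2) by auto
  then obtain \<Phi> where "\<Phi> \<in> Dset C"
    and \<Phi>: "\<And>z. (\<forall>i\<in>T. \<phi> i z \<le> \<Phi> z + \<delta>) \<and> (\<exists>i\<in>T. \<Phi> z \<le> \<phi> i z + \<delta>)"
    using Dset_approx_Max[OF T(2) _ _ assms(3), of \<phi> C] \<phi> T(1) by blast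
  moreover have "b - \<delta> < \<Phi> x" if "x \<in> K" for x
    using T(3) that \<Phi>[of x] by force
  moreover have "\<Phi> z \<le> a + \<delta>" if "z \<in> S" for z
    using \<Phi>[of z] \<phi> T(1) that by force
  ultimately show ?thesis
    by blast
qed

lemma Dset_separates_compacts:
  assumes A: "compact A" and B: "compact B" and "(\<delta>::real) > 0"
    and far: "\<forall>x\<in>A. \<forall>y\<in>B. ereal r < dist_C C x y"
  shows "\<exists>\<psi>\<in>Dset C. \<forall>x\<in>A. \<forall>y\<in>B. r - \<delta> < \<psi> x - \<psi> y"
proof (cases "A = {} \<or> B = {}")
  case True
  then show ?thesis
    using const_in_Dset by blast
next
  case False
  define \<eta> where "\<eta> = \<delta> / 5"
  have \<eta>: "\<eta> > 0"
    using \<open>\<delta> > 0\<close> by (simp add: \<eta>_def)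
  have point_sep: "\<exists>\<Phi>\<in>Dset C. (\<forall>x\<in>A. r - \<eta> < \<Phi> x) \<and> \<Phi> y \<le> \<eta>" if "y \<in> B" for y
  proof -
    have "\<exists>\<phi>\<in>Dset C. r < \<phi> x \<and> (\<forall>z\<in>{y}. \<phi> z \<le> 0)" if "x \<in> A" for x
    proof -
      obtain \<psi> where "\<psi> \<in> Dset C" "r < \<psi> x - \<psi> y"
        using far \<open>x \<in> A\<close> \<open>y \<in> B\<close> unfolding dist_C_def by (auto simp: less_SUP_iff)
      then show ?thesis
        by (intro bexI[of _ "\<lambda>z. \<psi> z + - \<psi> y"] Dset_add_const) auto
    qed
    then show ?thesis
      using Dset_compact_cover[OF A _ \<eta>, where b = r and S = "{y}" and a = 0] False by auto
  qed
  have "\<forall>y\<in>B. \<exists>\<phi>\<in>Dset C. - 2 * \<eta> < \<phi> y \<and> (\<forall>x\<in>A. \<phi> x \<le> \<eta> - r)"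
  proof (intro ballI)
    fix y assume "y \<in> B"
    then obtain \<Phi> where "\<Phi> \<in> Dset C" "\<forall>x\<in>A. r - \<eta> < \<Phi> x" "\<Phi> y \<le> \<eta>"
      using point_sep by blast
    then show "\<exists>\<phi>\<in>Dset C. - 2 * \<eta> < \<phi> y \<and> (\<forall>x\<in>A. \<phi> x \<le> \<eta> - r)"
      using \<eta> by (intro bexI[of _ "\<lambda>z. - \<Phi> z"] Dset_uminus) auto
  qed
  then obtain \<Phi> where "\<Phi> \<in> Dset C" "\<forall>y\<in>B. - 2 * \<eta> - \<eta> < \<Phi> y" "\<forall>x\<in>A. \<Phi> x \<le> \<eta> - r + \<eta>"
    using Dset_compact_cover[OF B _ \<eta>] False by blast
  moreover have "r - \<delta> < \<Phi> y - \<Phi> x" if "x \<in> A" "y \<in> B" for x y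
    using calculation(2,3) that by (fastforce simp: \<eta>_def)
  ultimately show ?thesis
    by (intro bexI[of _ "\<lambda>z. - \<Phi> z"] Dset_uminus) auto
qed

lemma setdist_hat_C_le_setdist_C: "setdist_hat_C C A B \<le> setdist_C C A B"
  unfolding setdist_hat_C_def setdist_C_def dist_C_def
  by (intro SUP_least INF_mono) (force intro: SUP_upper)

theorem lemma4p2:
  fixes C :: "real^'n \<Rightarrow> real^'n^'n" and A B :: "(real^'n) set"
  assumes "coeff_ok C" and "compact A" and "compact B"
  shows "setdist_hat_C C A B = setdist_C C A B"
proof (rule antisym[OF setdist_hat_C_le_setdist_C], rule ccontr)
  assume "\<not> setdist_C C A B \<le> setdist_hat_C C A B"
  then obtain r r' where r: "setdist_hat_C C A B < ereal r" "ereal r < ereal r'" "ereal r' < setdist_C C A B"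
    by (meson ereal_dense2 not_le)
  have "\<forall>x\<in>A. \<forall>y\<in>B. ereal r' < dist_C C x y"
    using r(3) unfolding setdist_C_def by (force dest: less_INF_D)
  then obtain \<psi> where "\<psi> \<in> Dset C" "\<forall>x\<in>A. \<forall>y\<in>B. r < \<psi> x - \<psi> y"
    using Dset_separates_compacts[OF assms(2,3), of "r' - r"] r(2) by force
  then have "ereal r \<le> setdist_hat_C C A B"
    unfolding setdist_hat_C_def
    by (intro SUP_upper2[of \<psi>] INF_greatest) (auto intro: less_imp_le)
  with r(1) show False
    by simp
qed

end
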